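(* Let $V$ be an $n$-dimensional vector space over $\mathbb R$ or $\mathbb C$ and let $K_1,\dots,K_n\in\mathrm{gl}(V)$ be pairwise commuting operators such that there exists $\xi\in V$ with $K_1\xi,\dots,K_n\xi$ linearly independent. Then $\mathfrak A=\operatorname{Span}(K_1,\dots,K_n)$ coincides with its centraliser $\mathcal C(\mathfrak A)=\{B\in\mathrm{gl}(V)\mid BA=AB\ \text{for all } A\in\mathfrak A\}$; consequently $\mathfrak A$ is a unital commutative associative subalgebra of $\mathrm{gl}(V)$. *)

theory Defs
  imports "HOL-Analysis.Analysis"
begin

text \<open>Operators on V = 'a^'n (dimension CARD('n)) are matrices 'a^'n^'n,
  composition is matrix product.\<close>

definition mat_scale :: "'a::field \<Rightarrow> 'a^'n^'m \<Rightarrow> 'a^'n^'m" where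
  "mat_scale c M = (\<chi> i j. c * M$i$j)"

definition op_span :: "('k::finite \<Rightarrow> 'a::field^'n^'n) \<Rightarrow> ('a^'n^'n) set" where
  "op_span K = {(\<Sum>k\<in>UNIV. mat_scale (c k) (K k)) | c. True}"

definition centraliser :: "('a::field^'n^'n) set \<Rightarrow> ('a^'n^'n) set" where
  "centraliser A = {B. \<forall>X\<in>A. B ** X = X ** B}"

definition lin_indep_family :: "('k::finite \<Rightarrow> 'a::field^'n) \<Rightarrow> bool" where
  "lin_indep_family v \<longleftrightarrow> (\<forall>c. (\<Sum>k\<in>UNIV. c k *s v k) = 0 \<longrightarrow> (\<forall>k. c k = 0))"

end

theory Submission
  imports Defs
begin

text \<open>The \<open>n\<close> independent vectors \<open>K\<^sub>i \<xi>\<close> form a basis, so an operator \<open>D\<close>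
  commuting with every \<open>K\<^sub>i\<close> is determined by \<open>D \<xi>\<close>, since \<open>D K\<^sub>i \<xi> = K\<^sub>i D \<xi>\<close>.
  Given \<open>B\<close> in the centraliser, pick \<open>C\<close> in the span with \<open>C \<xi> = B \<xi>\<close>; then \<open>D = B - C\<close>
  commutes with the \<open>K\<^sub>i\<close> and kills \<open>\<xi>\<close>, so \<open>B = C\<close>. As the span is commutative it
  lies in its centraliser, hence equals it, and inherits the unit and closure under products
  from the centraliser.\<close>

lemma sum_matrix_mult_left:
  "(\<Sum>k\<in>S. F k) ** (B :: 'a::semiring_1^'p^'n) = (\<Sum>k\<in>S. F k ** B)"
  by (induction S rule: infinite_finite_induct)
    (simp_all add: matrix_matrix_mult_def vec_eq_iff distrib_right sum.distrib)

lemma sum_matrix_mult_right: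
  "(A :: 'a::semiring_1^'n^'m) ** (\<Sum>k\<in>S. F k) = (\<Sum>k\<in>S. A ** F k)"
  by (induction S rule: infinite_finite_induct) (simp_all add: matrix_add_ldistrib)

lemma sum_matrix_vector_mult:
  "(\<Sum>k\<in>S. F k) *v (x :: 'a::semiring_1^'n) = (\<Sum>k\<in>S. F k *v x)"
  by (induction S rule: infinite_finite_induct) (simp_all add: matrix_vector_mult_add_rdistrib)

lemma matrix_diff_ldistrib: "(A :: 'a::ring_1^'n^'m) ** (B - C) = A ** B - A ** C"
  by (simp add: matrix_matrix_mult_def vec_eq_iff right_diff_distrib sum_subtractf)

lemma matrix_diff_rdistrib: "((A :: 'a::ring_1^'n^'m) - B) ** C = A ** C - B ** C"
  by (simp add: matrix_matrix_mult_def vec_eq_iff left_diff_distrib sum_subtractf)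

lemma mat_scale_mult_left: "mat_scale c A ** B = mat_scale c (A ** B)"
  by (simp add: mat_scale_def matrix_matrix_mult_def vec_eq_iff sum_distrib_left mult.assoc)

lemma mat_scale_mult_right: "A ** mat_scale c B = mat_scale c (A ** B)"
  by (simp add: mat_scale_def matrix_matrix_mult_def vec_eq_iff sum_distrib_left
      mult.left_commute)

lemma mat_scale_vector_mult: "mat_scale c A *v x = c *s (A *v x)"
  by (simp add: mat_scale_def matrix_vector_mult_def vec_eq_iff sum_distrib_left mult.assoc)

lemma lin_indep_family_spans:
  fixes v :: "'n::finite \<Rightarrow> 'a::field^'n"
  assumes "lin_indep_family v"
  shows "\<exists>c. (\<Sum>k\<in>UNIV. c k *s v k) = y"
proof -
  define M :: "'a^'n^'n" where "M = transpose (\<chi> k. v k)"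
  have column_M: "column k M = v k" for k
    by (simp add: M_def row_def vec_eq_iff)
  have "\<exists>B. B ** M = mat 1"
    using assms by (simp add: matrix_left_invertible_independent_columns column_M
        lin_indep_family_def)
  then have "surj ((*v) M)"
    by (metis matrix_left_right_inverse matrix_right_invertible_surjective)
  then obtain x where "M *v x = y"
    by (metis surjD)
  then show ?thesis
    by (auto simp: matrix_mult_sum column_M)
qed

lemma op_span_vector_mult:
  "(\<Sum>k\<in>UNIV. mat_scale (c k) (K k)) *v x = (\<Sum>k\<in>UNIV. c k *s (K k *v x))"
  by (simp add: sum_matrix_vector_mult mat_scale_vector_mult)

lemma generator_in_op_span: "K j \<in> op_span K"
proof -
  have "mat_scale (if k = j then 1 else 0) (K k) = (if k = j then K k else 0)" for k
    by (simp add: mat_scale_def vec_eq_iff)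
  then have "(\<Sum>k\<in>UNIV. mat_scale (if k = j then 1 else 0) (K k)) = K j"
    by simp
  then show ?thesis
    unfolding op_span_def by (intro CollectI exI[of _ "\<lambda>k. if k = j then 1 else 0"]) simp
qed

lemma centraliser_op_span: "centraliser (op_span K) = {B. \<forall>k. B ** K k = K k ** B}"
proof (intro equalityI subsetI CollectI)
  fix B
  assume "B \<in> centraliser (op_span K)"
  then show "\<forall>k. B ** K k = K k ** B"
    using generator_in_op_span by (auto simp: centraliser_def)
next
  fix B
  assume "B \<in> {B. \<forall>k. B ** K k = K k ** B}"
  then show "B \<in> centraliser (op_span K)"
    by (auto simp: centraliser_def op_span_def sum_matrix_mult_left sum_matrix_mult_right
        mat_scale_mult_left mat_scale_mult_right)
qed

lemma mat_1_in_centraliser: "mat 1 \<in> centraliser A"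
  by (simp add: centraliser_def)

lemma centraliser_mult_closed:
  assumes "X \<in> centraliser A" and "Y \<in> centraliser A"
  shows "X ** Y \<in> centraliser A"
  using assms by (simp add: centraliser_def) (metis matrix_mul_assoc)

lemma centraliser_diff_closed:
  assumes "X \<in> centraliser A" and "Y \<in> centraliser A"
  shows "X - Y \<in> centraliser A"
  using assms by (simp add: centraliser_def matrix_diff_ldistrib matrix_diff_rdistrib)

lemma op_span_subset_centraliser:
  assumes "\<forall>i j. K i ** K j = K j ** K i"
  shows "op_span K \<subseteq> centraliser (op_span K)"
proof
  fix X
  assume X: "X \<in> op_span K"
  have "K k \<in> centraliser (op_span K)" for k
    using assms by (simp add: centraliser_op_span)
  then have "K k ** X = X ** K k" for k
    using X by (simp add: centraliser_def)
  then show "X \<in> centraliser (op_span K)"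
    by (simp add: centraliser_op_span)
qed

lemma eq_0_if_commutes_and_kills_cyclic_vector:
  fixes K :: "'n::finite \<Rightarrow> 'a::field^'n^'n"
  assumes commutes: "\<forall>k. D ** K k = K k ** D"
    and cyclic: "lin_indep_family (\<lambda>k. K k *v \<xi>)"
    and kills: "D *v \<xi> = 0"
  shows "D = 0"
proof -
  have kills_basis: "D *v (K k *v \<xi>) = 0" for k
    using commutes kills by (metis matrix_vector_mul_assoc matrix_vector_mult_0_right)
  have "D *v y = 0" for y
  proof -
    obtain c where "(\<Sum>k\<in>UNIV. c k *s (K k *v \<xi>)) = y"
      using lin_indep_family_spans[OF cyclic] by blast
    then show ?thesis
      using kills_basis
      by (auto simp: vec.linear_sum[OF matrix_vector_mul_linear_gen]
          vec.linear_scale[OF matrix_vector_mul_linear_gen])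
  qed
  then show ?thesis
    by (simp add: matrix_eq)
qed

lemma centraliser_subset_op_span:
  fixes K :: "'n::finite \<Rightarrow> 'a::field^'n^'n"
  assumes comm: "\<forall>i j. K i ** K j = K j ** K i"
    and cyclic: "lin_indep_family (\<lambda>k. K k *v \<xi>)"
  shows "centraliser (op_span K) \<subseteq> op_span K"
proof
  fix B
  assume B: "B \<in> centraliser (op_span K)"
  obtain c where c: "(\<Sum>k\<in>UNIV. c k *s (K k *v \<xi>)) = B *v \<xi>"
    using lin_indep_family_spans[OF cyclic] by blast
  define C where "C = (\<Sum>k\<in>UNIV. mat_scale (c k) (K k))"
  have C: "C \<in> op_span K"
    unfolding C_def op_span_def by blast
  have "B - C \<in> centraliser (op_span K)"
    using B C op_span_subset_centraliser[OF comm] by (blast intro: centraliser_diff_closed)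
  moreover have "(B - C) *v \<xi> = 0"
    by (simp add: C_def op_span_vector_mult c matrix_vector_mult_diff_rdistrib)
  ultimately have "B - C = 0"
    by (intro eq_0_if_commutes_and_kills_cyclic_vector[OF _ cyclic])
      (simp_all add: centraliser_op_span)
  then show "B \<in> op_span K"
    using C by simp
qed

lemma op_span_cyclic_maximal_commutative:
  fixes K :: "'n::finite \<Rightarrow> 'a::field^'n^'n"
  assumes comm: "\<forall>i j. K i ** K j = K j ** K i"
    and cyclic: "lin_indep_family (\<lambda>k. K k *v \<xi>)"
  shows "centraliser (op_span K) = op_span K \<and>
    mat 1 \<in> op_span K \<and>
    (\<forall>X\<in>op_span K. \<forall>Y\<in>op_span K. X ** Y \<in> op_span K \<and> X ** Y = Y ** X)"
proof -
  have eq: "centraliser (op_span K) = op_span K"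
    using op_span_subset_centraliser[OF comm] centraliser_subset_op_span[OF comm cyclic]
    by blast
  have "X ** Y = Y ** X" if "X \<in> op_span K" "Y \<in> op_span K" for X Y
    using that op_span_subset_centraliser[OF comm] by (auto simp: centraliser_def)
  then show ?thesis
    using eq mat_1_in_centraliser centraliser_mult_closed by metis
qed

theorem lemma2p1:
  shows "(\<forall>K :: 'n::finite \<Rightarrow> real^'n^'n.
            (\<forall>i j. K i ** K j = K j ** K i) \<and> (\<exists>\<xi>. lin_indep_family (\<lambda>i. K i *v \<xi>)) \<longrightarrow>
            centraliser (op_span K) = op_span K \<and>
            mat 1 \<in> op_span K \<and>
            (\<forall>X\<in>op_span K. \<forall>Y\<in>op_span K. X ** Y \<in> op_span K \<and> X ** Y = Y ** X))
       \<and> (\<forall>K :: 'n::finite \<Rightarrow> complex^'n^'n.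
            (\<forall>i j. K i ** K j = K j ** K i) \<and> (\<exists>\<xi>. lin_indep_family (\<lambda>i. K i *v \<xi>)) \<longrightarrow>
            centraliser (op_span K) = op_span K \<and>
            mat 1 \<in> op_span K \<and>
            (\<forall>X\<in>op_span K. \<forall>Y\<in>op_span K. X ** Y \<in> op_span K \<and> X ** Y = Y ** X))"
  using op_span_cyclic_maximal_commutative[where 'a = real]
    op_span_cyclic_maximal_commutative[where 'a = complex]
  by blast

end
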